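(* Let $M$ be a multiplication $L$-module and define $\delta_2:M\to M$ by $\delta_2(A)=\bigwedge\{H\in M: A\leqslant H,\ H\text{ maximal in }M\}$ for proper $A\in M$ and $\delta_2(I_M)=I_M$. Then $\delta_2(A\wedge B)=\delta_2(A)\wedge\delta_2(B)$ for all $A,B\in M$.
   Context: $L$ is a multiplicative lattice (complete lattice with commutative, associative, join-distributive multiplication with identity $1$), compactly generated, $1$ compact, finite products of compact elements compact. An $L$-module is a complete lattice $M$ (least $O_M$, greatest $I_M$) with product $aB\in M$ satisfying $(\bigvee a_\alpha)A=\bigvee(a_\alpha A)$, $a(\bigvee A_\alpha)=\bigvee(aA_\alpha)$, $(ab)A=a(bA)$, $1A=A$, $0A=O_M$. $M$ is a multiplication module if every $N\in M$ equals $aI_M$ for some $a\in L$. Proper means $<I_M$; a proper $N$ is maximal if $N\leqslant B$ implies $B=N$ or $B=I_M$. The meet of the empty family is $I_M$. *)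

theory Defs
  imports Main
begin

definition compact_elem :: "'a::complete_lattice \<Rightarrow> bool" where
  "compact_elem c \<longleftrightarrow>
     (\<forall>S. c \<le> Sup S \<longrightarrow> (\<exists>F. finite F \<and> F \<subseteq> S \<and> c \<le> Sup F))"

definition multiplicative_lattice :: "('a::complete_lattice \<Rightarrow> 'a \<Rightarrow> 'a) \<Rightarrow> bool" where
  "multiplicative_lattice mult \<longleftrightarrow>
     (\<forall>a b. mult a b = mult b a) \<and>
     (\<forall>a b c. mult (mult a b) c = mult a (mult b c)) \<and>
     (\<forall>a S. mult a (Sup S) = Sup ((\<lambda>s. mult a s) ` S)) \<and>
     (\<forall>a. mult top a = a) \<and>
     (\<forall>x::'a. \<exists>C. (\<forall>c\<in>C. compact_elem c) \<and> x = Sup C) \<and>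
     compact_elem (top :: 'a) \<and>
     (\<forall>a b. compact_elem a \<longrightarrow> compact_elem b \<longrightarrow> compact_elem (mult a b))"

definition L_module ::
  "('a::complete_lattice \<Rightarrow> 'a \<Rightarrow> 'a) \<Rightarrow> ('a \<Rightarrow> 'm::complete_lattice \<Rightarrow> 'm) \<Rightarrow> bool" where
  "L_module mult act \<longleftrightarrow>
     (\<forall>S A. act (Sup S) A = Sup ((\<lambda>a. act a A) ` S)) \<and>
     (\<forall>a T. act a (Sup T) = Sup ((\<lambda>A. act a A) ` T)) \<and>
     (\<forall>a b A. act (mult a b) A = act a (act b A)) \<and>
     (\<forall>A. act top A = A) \<and>
     (\<forall>A. act bot A = bot)"

definition multiplication_module :: "('a \<Rightarrow> 'm::complete_lattice \<Rightarrow> 'm) \<Rightarrow> bool" where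
  "multiplication_module act \<longleftrightarrow> (\<forall>N. \<exists>a. N = act a top)"

definition maximal_elem :: "'m::complete_lattice \<Rightarrow> bool" where
  "maximal_elem N \<longleftrightarrow> N < top \<and> (\<forall>B. N \<le> B \<longrightarrow> B = N \<or> B = top)"

definition delta2 :: "'m::complete_lattice \<Rightarrow> 'm" where
  "delta2 A = (if A = top then top else Inf {H. A \<le> H \<and> maximal_elem H})"

end

theory Submission
  imports Defs
begin

text \<open>In a multiplication module every maximal element H is prime: if A \<le> H fails, then
  H \<squnion> A = I, so B = bI = bH \<squnion> bA \<le> H \<squnion> (A \<sqinter> B) = H. Consequently the maximal elements
  above A \<sqinter> B are exactly those above A together with those above B, and the meet over
  a union is the meet of the two meets.\<close>

lemma L_module_act_sup_left:
  assumes "L_module mult act"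
  shows "act (sup a b) X = sup (act a X) (act b X)"
proof -
  have "act (Sup {a, b}) X = Sup ((\<lambda>a. act a X) ` {a, b})"
    using assms unfolding L_module_def by blast
  then show ?thesis by simp
qed

lemma L_module_act_sup_right:
  assumes "L_module mult act"
  shows "act a (sup X Y) = sup (act a X) (act a Y)"
proof -
  have "act a (Sup {X, Y}) = Sup (act a ` {X, Y})"
    using assms unfolding L_module_def by blast
  then show ?thesis by simp
qed

lemma L_module_act_mono:
  assumes "L_module mult act" and "X \<le> Y"
  shows "act a X \<le> act a Y"
  using L_module_act_sup_right[OF assms(1), of a X Y] assms(2)
  by (metis sup.absorb2 sup.cobounded1)

lemma L_module_act_le:
  assumes "L_module mult act"
  shows "act a X \<le> X"
proof -
  have "act top X = X" using assms unfolding L_module_def by blast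
  moreover have "act top X = sup (act a X) (act top X)"
    using L_module_act_sup_left[OF assms, of a top X] by simp
  ultimately show ?thesis by (metis sup.cobounded1)
qed

lemma multiplication_module_maximal_prime:
  fixes act :: "'a::complete_lattice \<Rightarrow> 'm::complete_lattice \<Rightarrow> 'm" and A B H :: 'm
  assumes "L_module mult act" and "multiplication_module act"
    and "maximal_elem H" and "inf A B \<le> H"
  shows "A \<le> H \<or> B \<le> H"
proof (cases "A \<le> H")
  case False
  then have "sup H A \<noteq> H" by (metis sup.cobounded2)
  with \<open>maximal_elem H\<close> have HA_top: "sup H A = top"
    unfolding maximal_elem_def by (metis sup.cobounded1)
  obtain b where b: "B = act b top"
    using \<open>multiplication_module act\<close> unfolding multiplication_module_def by blast
  have "act b A \<le> inf A B"
    using L_module_act_le[OF assms(1)] L_module_act_mono[OF assms(1), of A top b] b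
    by simp
  then have "act b A \<le> H" using \<open>inf A B \<le> H\<close> by (rule order_trans)
  moreover have "act b H \<le> H" by (rule L_module_act_le[OF assms(1)])
  ultimately have "act b (sup H A) \<le> H"
    by (simp add: L_module_act_sup_right[OF assms(1)])
  then show ?thesis by (simp add: HA_top b)
qed simp

lemma delta2_eq_Inf_maximal: "delta2 A = Inf {H. A \<le> H \<and> maximal_elem H}"
  by (cases "A = top") (auto simp: delta2_def maximal_elem_def top_le)

lemma delta2_inf_if_maximal_prime:
  assumes "\<And>H. maximal_elem H \<Longrightarrow> inf A B \<le> H \<Longrightarrow> A \<le> H \<or> B \<le> H"
  shows "delta2 (inf A B) = inf (delta2 A) (delta2 B)"
proof -
  have "{H. inf A B \<le> H \<and> maximal_elem H}
      = {H. A \<le> H \<and> maximal_elem H} \<union> {H. B \<le> H \<and> maximal_elem H}"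
    using assms by (auto intro: le_infI1 le_infI2)
  then show ?thesis by (simp add: delta2_eq_Inf_maximal Inf_union_distrib)
qed

theorem theorem3p7:
  fixes mult :: "'a::complete_lattice \<Rightarrow> 'a \<Rightarrow> 'a"
    and act :: "'a \<Rightarrow> 'm::complete_lattice \<Rightarrow> 'm"
  assumes "multiplicative_lattice mult"
    and "L_module mult act"
    and "multiplication_module act"
  shows "\<forall>A B::'m. delta2 (inf A B) = inf (delta2 A) (delta2 B)"
  using multiplication_module_maximal_prime[OF assms(2,3)]
  by (blast intro: delta2_inf_if_maximal_prime)

end
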